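(* Let $(S,m)$, $\phi:S'\to S''$ be as in the context, and let $k$, $\overline{S}$, $\psi_i$ be as constructed there. Then for all $i,j\in\mathbb{Z}/k$ and $s,t,s',t'\in S$ with $s\neq t$, $\psi_i(s)=\psi_j(s')$ and $\psi_i(t)=\psi_j(t')$, we have $s'\ne t'$ and $m(s,t)=m(s',t')$. Consequently the function $\overline{m}$ on 2-element subsets $\{x,y\}$ of $\overline{S}$ given by $\overline{m}(x,y)=m(s,t)$ if $x=\psi_i(s)$, $y=\psi_i(t)$ for some $i\in\mathbb{Z}/k$ and $s,t\in S$, and $\overline{m}(x,y)=\infty$ otherwise, is well defined.
   Context: $(S,m)$ is an Artin system: a finite set $S$ with a function $m$ from 2-element subsets of $S$ to $\{2,3,\dots\}\cup\{\infty\}$. $\phi:S'\to S''$ is a bijection between subsets of $S$ with $m(s,s')=m(\phi(s),\phi(s'))$ for all distinct $s,s'\in S'$. Let $\Lambda$ be the directed graph with vertex set $S$ and an edge $(s,\phi(s))$ for each $s\in S'$; it is a disjoint union of directed cycles and directed (non-closed) paths. Choose an integer $k$ that is a multiple of the length (number of edges) of each cycle in $\Lambda$ and strictly greater than twice the length of each path in $\Lambda$. Let $\overline{S}$ be the quotient of $\mathbb{Z}/k\times S$ by the equivalence relation generated by $(i,s)\sim(i+1,\phi(s))$ for $i\in\mathbb{Z}/k$, $s\in S'$, and let $\psi_i:S\to\overline{S}$ send $s$ to the class of $(i,s)$. *)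

theory Defs
  imports Main "HOL-Library.Extended_Nat"
begin

text \<open>The graph Lambda has vertex set S and an edge (s, phi s) for each s in S'.
  A walk of n edges starting at s exists iff the first n iterates lie in S'.\<close>
definition walk :: "('a \<Rightarrow> 'a) \<Rightarrow> 'a set \<Rightarrow> 'a \<Rightarrow> nat \<Rightarrow> bool" where
  "walk \<phi> S' s n \<longleftrightarrow> (\<forall>i<n. (\<phi> ^^ i) s \<in> S')"

definition cycle_len :: "('a \<Rightarrow> 'a) \<Rightarrow> 'a set \<Rightarrow> 'a \<Rightarrow> nat \<Rightarrow> bool" where
  "cycle_len \<phi> S' s n \<longleftrightarrow> n \<ge> 1 \<and> walk \<phi> S' s n \<and> (\<phi> ^^ n) s = s
      \<and> (\<forall>j. 1 \<le> j \<and> j < n \<longrightarrow> (\<phi> ^^ j) s \<noteq> s)"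

text \<open>A maximal directed (non-closed) path component of Lambda starting at s
  (s has no incoming edge) with n edges (its endpoint has no outgoing edge).\<close>
definition path_len :: "('a \<Rightarrow> 'a) \<Rightarrow> 'a set \<Rightarrow> 'a set \<Rightarrow> 'a \<Rightarrow> nat \<Rightarrow> bool" where
  "path_len \<phi> S' S'' s n \<longleftrightarrow> s \<notin> S'' \<and> walk \<phi> S' s n \<and> (\<phi> ^^ n) s \<notin> S'"

text \<open>Generating relation on Z/k x S (Z/k represented by {0..<k}):
  (i,s) ~ (i+1,phi s) for s in S'.\<close>
definition gen_rel :: "nat \<Rightarrow> ('a \<Rightarrow> 'a) \<Rightarrow> 'a set \<Rightarrow> ((nat \<times> 'a) \<times> (nat \<times> 'a)) set" where
  "gen_rel k \<phi> S' = {((i, s), ((i + 1) mod k, \<phi> s)) | i s. i < k \<and> s \<in> S'}"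

definition eqv :: "nat \<Rightarrow> ('a \<Rightarrow> 'a) \<Rightarrow> 'a set \<Rightarrow> ((nat \<times> 'a) \<times> (nat \<times> 'a)) set" where
  "eqv k \<phi> S' = (gen_rel k \<phi> S' \<union> (gen_rel k \<phi> S')\<inverse>)\<^sup>*"

definition Sbar :: "nat \<Rightarrow> ('a \<Rightarrow> 'a) \<Rightarrow> 'a set \<Rightarrow> 'a set \<Rightarrow> (nat \<times> 'a) set set" where
  "Sbar k \<phi> S S' = ({0..<k} \<times> S) // eqv k \<phi> S'"

definition psi :: "nat \<Rightarrow> ('a \<Rightarrow> 'a) \<Rightarrow> 'a set \<Rightarrow> nat \<Rightarrow> 'a \<Rightarrow> (nat \<times> 'a) set" where
  "psi k \<phi> S' i s = eqv k \<phi> S' `` {(i, s)}"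

end

theory Submission
  imports Defs
begin

(* The generating relation (i,s) -> (i+1, phi s) is the graph of a
   partial injection, so two pairs are equivalent iff one is reached from the other by
   walking a steps along Lambda while the index moves by a (mod k).  Hence
   psi_i(s) = psi_j(s') and psi_i(t) = psi_j(t') give walks s ~> s' and t ~> t' (each in
   one of the two directions) whose lengths agree modulo k.  The heart of the argument is
   that such walks can be synchronised: both pairs are connected by walks of one common
   length in one common direction.  This uses the choice of k: a walk of length at least
   k/2 cannot lie on a path component (those have fewer than k/2 edges), so its start
   lies on a cycle, where phi^k is the identity and walk lengths only matter modulo k.
   Along synchronised walks phi^c is injective and preserves m, which gives the first
   claim; the second one (mbar well defined) is then a general choice principle for
   functions on doubletons. *)


lemma rtrancl_symcl_partial_injection:
  assumes func: "single_valued R" and inj: "single_valued (R\<inverse>)"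
  shows "(R \<union> R\<inverse>)\<^sup>* \<subseteq> R\<^sup>* \<union> (R\<^sup>*)\<inverse>"
proof (rule subrelI)
  fix x z assume "(x, z) \<in> (R \<union> R\<inverse>)\<^sup>*"
  then show "(x, z) \<in> R\<^sup>* \<union> (R\<^sup>*)\<inverse>"
  proof (induction rule: rtrancl_induct)
    case base then show ?case by simp
  next
    case (step y z)
    from step.hyps(2) show ?case
    proof
      assume yz: "(y, z) \<in> R"
      show ?thesis
      proof (cases "(x, y) \<in> R\<^sup>*")
        case True then show ?thesis using yz by auto
      next
        case False
        then have "(y, x) \<in> R\<^sup>*" using step.IH by auto
        then have "(x, z) \<in> R\<^sup>* \<or> (z, x) \<in> R\<^sup>*"
          using single_valued_confluent[OF func] yz by blast
        then show ?thesis by auto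
      qed
    next
      assume zy: "(y, z) \<in> R\<inverse>"
      show ?thesis
      proof (cases "(y, x) \<in> R\<^sup>*")
        case True then show ?thesis using zy by (auto intro: converse_rtrancl_into_rtrancl)
      next
        case False
        then have "(y, x) \<in> (R\<inverse>)\<^sup>*" using step.IH by (auto simp: rtrancl_converse)
        then have "(x, z) \<in> (R\<inverse>)\<^sup>* \<or> (z, x) \<in> (R\<inverse>)\<^sup>*"
          using single_valued_confluent[OF inj] zy by blast
        then show ?thesis by (auto simp: rtrancl_converse)
      qed
    qed
  qed
qed


lemma walk_mono: "walk \<phi> S' x n \<Longrightarrow> a \<le> n \<Longrightarrow> walk \<phi> S' x a"
  by (auto simp: walk_def)

lemma walk_Suc: "walk \<phi> S' x (Suc n) \<longleftrightarrow> walk \<phi> S' x n \<and> (\<phi> ^^ n) x \<in> S'"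
  by (auto simp: walk_def less_Suc_eq)

lemma funpow_add_apply: "(f ^^ (m + n)) x = (f ^^ m) ((f ^^ n) x)"
  by (simp add: funpow_add)

lemma walk_shift: "walk \<phi> S' x (c + n) \<Longrightarrow> walk \<phi> S' ((\<phi> ^^ c) x) n"
  by (auto simp: walk_def simp flip: funpow_add_apply)

definition reach :: "('a \<Rightarrow> 'a) \<Rightarrow> 'a set \<Rightarrow> 'a \<Rightarrow> nat \<Rightarrow> 'a \<Rightarrow> bool" where
  "reach \<phi> S' x n y \<longleftrightarrow> walk \<phi> S' x n \<and> (\<phi> ^^ n) x = y"

lemma walk_funpow_inj:
  assumes inj: "inj_on \<phi> S'"
    and "walk \<phi> S' s n" "walk \<phi> S' t n" "(\<phi> ^^ n) s = (\<phi> ^^ n) t"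
  shows "s = t"
  using assms(2-)
proof (induction n)
  case (Suc n)
  then show ?case
    using inj_onD[OF inj, of "(\<phi> ^^ n) s" "(\<phi> ^^ n) t"] by (simp add: walk_Suc)
qed simp

lemma walk_funpow_preserves_m:
  assumes inj: "inj_on \<phi> S'"
    and phi_m: "\<forall>s\<in>S'. \<forall>t\<in>S'. s \<noteq> t \<longrightarrow> m {\<phi> s, \<phi> t} = m {s, t}"
    and "walk \<phi> S' s n" "walk \<phi> S' t n" "s \<noteq> t"
  shows "m {(\<phi> ^^ n) s, (\<phi> ^^ n) t} = m {s, t}"
  using assms(3-)
proof (induction n)
  case (Suc n)
  then have "(\<phi> ^^ n) s \<in> S'" "(\<phi> ^^ n) t \<in> S'" "(\<phi> ^^ n) s \<noteq> (\<phi> ^^ n) t"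
    using walk_funpow_inj[OF inj] by (auto simp: walk_Suc)
  then show ?case using Suc phi_m by (simp add: walk_Suc)
qed simp

definition synchronous :: "('a \<Rightarrow> 'a) \<Rightarrow> 'a set \<Rightarrow> 'a \<Rightarrow> 'a \<Rightarrow> 'a \<Rightarrow> 'a \<Rightarrow> bool" where
  "synchronous \<phi> S' s t s' t' \<longleftrightarrow>
     (\<exists>c. reach \<phi> S' s c s' \<and> reach \<phi> S' t c t') \<or> (\<exists>c. reach \<phi> S' s' c s \<and> reach \<phi> S' t' c t)"

lemma synchronous_transport:
  assumes inj: "inj_on \<phi> S'"
    and phi_m: "\<forall>s\<in>S'. \<forall>t\<in>S'. s \<noteq> t \<longrightarrow> m {\<phi> s, \<phi> t} = m {s, t}"
    and sync: "synchronous \<phi> S' s t s' t'" and st: "s \<noteq> t"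
  shows "s' \<noteq> t' \<and> m {s, t} = m {s', t'}"
  using sync unfolding synchronous_def reach_def
proof (elim disjE exE conjE)
  fix c assume ws: "walk \<phi> S' s c" and wt: "walk \<phi> S' t c"
    and s': "(\<phi> ^^ c) s = s'" and t': "(\<phi> ^^ c) t = t'"
  have "s' \<noteq> t'" using walk_funpow_inj[OF inj ws wt] st s' t' by auto
  moreover have "m {s', t'} = m {s, t}"
    using walk_funpow_preserves_m[OF inj phi_m ws wt st] s' t' by simp
  ultimately show ?thesis by simp
next
  fix c assume ws': "walk \<phi> S' s' c" and wt': "walk \<phi> S' t' c"
    and s: "(\<phi> ^^ c) s' = s" and t: "(\<phi> ^^ c) t' = t"
  have "s' \<noteq> t'" using st s t by blast
  moreover have "m {s, t} = m {s', t'}"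
    using walk_funpow_preserves_m[OF inj phi_m ws' wt' \<open>s' \<noteq> t'\<close>] s t by simp
  ultimately show ?thesis by simp
qed


lemma mod_add_left_cancel_nat: "((i::nat) + a) mod k = (i + b) mod k \<Longrightarrow> a mod k = b mod k"
  unfolding nat_mod_eq_iff by (simp add: add.assoc)

lemma mod_round_trip:
  assumes "(i::nat) < k" "j = (i + a) mod k" "i = (j + b) mod k"
  shows "(a + b) mod k = 0"
proof -
  have "(i + (a + b)) mod k = ((i + a) mod k + b) mod k"
    by (simp add: mod_add_left_eq add.assoc)
  also have "\<dots> = i"
    using assms(3) unfolding assms(2) by (rule sym)
  also have "i = (i + 0) mod k"
    using assms(1) by simp
  finally have "(i + (a + b)) mod k = (i + 0) mod k" .
  from mod_add_left_cancel_nat[OF this] show ?thesis by simp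
qed


(* Description of the equivalence relation by walks: the generating relation is the
   graph of a partial injection whose chains are walks of Lambda. *)
lemma gen_rel_single_valued: "single_valued (gen_rel k \<phi> S')"
  by (auto simp: gen_rel_def single_valued_def)

lemma gen_rel_converse_single_valued:
  assumes inj: "inj_on \<phi> S'"
  shows "single_valued ((gen_rel k \<phi> S')\<inverse>)"
proof (rule single_valuedI)
  fix x y z assume "(x, y) \<in> (gen_rel k \<phi> S')\<inverse>" "(x, z) \<in> (gen_rel k \<phi> S')\<inverse>"
  then obtain i s i' s' where y: "y = (i, s)" "i < k" "s \<in> S'" and z: "z = (i', s')" "i' < k" "s' \<in> S'"
    and x: "x = ((i + 1) mod k, \<phi> s)" "x = ((i' + 1) mod k, \<phi> s')"
    unfolding gen_rel_def by blast
  have "(1 + i) mod k = (1 + i') mod k" "\<phi> s = \<phi> s'"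
    using x by (auto simp only: add.commute prod.inject)
  then have "i mod k = i' mod k" "s = s'"
    using mod_add_left_cancel_nat inj_onD[OF inj _ y(3) z(3)] by blast+
  then show "y = z" using y z by simp
qed

lemma gen_rel_rtrancl_reach:
  assumes "((i, s), (j, u)) \<in> (gen_rel k \<phi> S')\<^sup>*" "i < k"
  shows "\<exists>a. reach \<phi> S' s a u \<and> j = (i + a) mod k"
  using assms(1)
proof (induction rule: rtrancl_induct2)
  case refl
  then show ?case using assms(2) by (intro exI[of _ 0]) (simp add: reach_def walk_def)
next
  case (step j u j' u')
  then obtain a where a: "reach \<phi> S' s a u" "j = (i + a) mod k" by blast
  from step.hyps(2) have "u \<in> S'" "j' = (j + 1) mod k" "u' = \<phi> u"
    by (auto simp: gen_rel_def)
  then have "reach \<phi> S' s (Suc a) u'" "j' = (i + Suc a) mod k"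
    using a by (simp_all add: reach_def walk_Suc mod_Suc_eq)
  then show ?case by blast
qed

lemma eqv_reach:
  assumes inj: "inj_on \<phi> S'" and rel: "((i, s), (j, u)) \<in> eqv k \<phi> S'"
    and ij: "i < k" "j < k"
  shows "(\<exists>a. reach \<phi> S' s a u \<and> j = (i + a) mod k) \<or> (\<exists>a. reach \<phi> S' u a s \<and> i = (j + a) mod k)"
proof -
  have "((i, s), (j, u)) \<in> (gen_rel k \<phi> S')\<^sup>* \<union> ((gen_rel k \<phi> S')\<^sup>*)\<inverse>"
    using rel unfolding eqv_def
    by (rule subsetD[OF rtrancl_symcl_partial_injection[OF gen_rel_single_valued
          gen_rel_converse_single_valued[OF inj]]])
  then show ?thesis
  proof
    assume "((i, s), (j, u)) \<in> (gen_rel k \<phi> S')\<^sup>*"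
    from gen_rel_rtrancl_reach[OF this ij(1)] show ?thesis by blast
  next
    assume "((i, s), (j, u)) \<in> ((gen_rel k \<phi> S')\<^sup>*)\<inverse>"
    then have "((j, u), (i, s)) \<in> (gen_rel k \<phi> S')\<^sup>*" by simp
    from gen_rel_rtrancl_reach[OF this ij(2)] show ?thesis by blast
  qed
qed

lemma psi_eq_eqv:
  assumes "psi k \<phi> S' i s = psi k \<phi> S' j u"
  shows "((i, s), (j, u)) \<in> eqv k \<phi> S'"
proof -
  have "(j, u) \<in> psi k \<phi> S' j u" by (simp add: psi_def eqv_def)
  then have "(j, u) \<in> psi k \<phi> S' i s" using assms by simp
  then show ?thesis by (simp add: psi_def)
qed


lemma doubleton_function_exists:
  assumes single: "\<And>x y v w. x \<noteq> y \<Longrightarrow> rep x y v \<Longrightarrow> rep x y w \<Longrightarrow> v = w"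
    and sym: "\<And>x y v. rep x y v \<Longrightarrow> rep y x v"
  shows "\<exists>h. \<forall>x y. x \<noteq> y \<longrightarrow>
           (\<forall>v. rep x y v \<longrightarrow> h {x, y} = v) \<and> ((\<nexists>v. rep x y v) \<longrightarrow> h {x, y} = d)"
proof -
  let ?val = "\<lambda>X v. \<exists>x y. X = {x, y} \<and> x \<noteq> y \<and> rep x y v"
  define h where "h X = (if \<exists>v. ?val X v then SOME v. ?val X v else d)" for X
  have val_iff: "?val {x, y} v \<longleftrightarrow> rep x y v" if xy: "x \<noteq> y" for x y v
  proof
    assume "?val {x, y} v"
    then obtain x' y' where "{x, y} = {x', y'}" "rep x' y' v" by blast
    then show "rep x y v" using sym by (auto simp: doubleton_eq_iff)
  next
    assume "rep x y v"
    then show "?val {x, y} v" using xy by blast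
  qed
  have "h {x, y} = v" if xy: "x \<noteq> y" and r: "rep x y v" for x y v
  proof -
    have ex: "\<exists>v. ?val {x, y} v" using xy r by blast
    then have "?val {x, y} (SOME v. ?val {x, y} v)" by (rule someI_ex)
    then have "rep x y (SOME v. ?val {x, y} v)" using val_iff[OF xy] by blast
    then have "(SOME v. ?val {x, y} v) = v" using single[OF xy _ r] by blast
    then show ?thesis using ex by (simp add: h_def)
  qed
  moreover have "h {x, y} = d" if xy: "x \<noteq> y" and none: "\<nexists>v. rep x y v" for x y
  proof -
    have "\<not> (\<exists>v. ?val {x, y} v)" using val_iff[OF xy] none by blast
    then show ?thesis unfolding h_def by (rule if_not_P)
  qed
  ultimately show ?thesis by blast
qed


locale fold_data =
  fixes S S' S'' :: "'a set" and \<phi> :: "'a \<Rightarrow> 'a" and k :: nat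
  assumes finS: "finite S"
    and S'_sub: "S' \<subseteq> S" and S''_sub: "S'' \<subseteq> S"
    and phi_bij: "bij_betw \<phi> S' S''"
    and k_cycles: "\<forall>s\<in>S. \<forall>n. cycle_len \<phi> S' s n \<longrightarrow> n dvd k"
    and k_paths: "\<forall>s\<in>S. \<forall>n. path_len \<phi> S' S'' s n \<longrightarrow> 2 * n < k"
begin

lemma inj: "inj_on \<phi> S'"
  using phi_bij by (simp add: bij_betw_def)

lemma walk_in_S: "x \<in> S \<Longrightarrow> walk \<phi> S' x n \<Longrightarrow> i \<le> n \<Longrightarrow> (\<phi> ^^ i) x \<in> S"
  using phi_bij S'_sub S''_sub by (cases i) (auto simp: walk_def bij_betw_def)

(* x lies on a cycle of Lambda; since k is a multiple of the cycle lengths,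
   phi^k fixes x. *)
definition on_cycle :: "'a \<Rightarrow> bool" where
  "on_cycle x \<longleftrightarrow> (\<phi> ^^ k) x = x \<and> (\<forall>N. walk \<phi> S' x N)"

lemma on_cycle_mod: "on_cycle x \<Longrightarrow> (\<phi> ^^ n) x = (\<phi> ^^ (n mod k)) x"
  unfolding on_cycle_def by (simp add: funpow_mod_eq)

lemma on_cycle_shift:
  assumes "on_cycle x" shows "on_cycle ((\<phi> ^^ a) x)"
proof -
  have "(\<phi> ^^ k) ((\<phi> ^^ a) x) = (\<phi> ^^ a) ((\<phi> ^^ k) x)"
    by (simp flip: funpow_add_apply add: add.commute)
  then show ?thesis
    using assms walk_shift[of \<phi> S' x a] by (simp add: on_cycle_def)
qed

lemma on_cycle_reach_mod:
  assumes "on_cycle x" "reach \<phi> S' x b y" "a mod k = b mod k"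
  shows "reach \<phi> S' x a y"
  using assms on_cycle_mod[of x a] on_cycle_mod[of x b] by (simp add: reach_def on_cycle_def)

lemma on_cycle_reach_back:
  assumes cyc: "on_cycle x" and xy: "reach \<phi> S' x a y" and ab: "(a + b) mod k = 0"
  shows "reach \<phi> S' y b x"
proof -
  have "(\<phi> ^^ b) y = (\<phi> ^^ (b + a)) x"
    using xy by (simp add: reach_def funpow_add_apply)
  also have "\<dots> = (\<phi> ^^ ((a + b) mod k)) x"
    using on_cycle_mod[OF cyc, of "b + a"] by (simp add: add.commute)
  also have "\<dots> = x"
    using ab by simp
  finally show ?thesis
    using on_cycle_shift[OF cyc, of a] xy by (simp add: reach_def on_cycle_def)
qed

(* A point returning to itself along a walk lies on a cycle: the minimal return time
   is the length of its cycle, which divides k. *)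
lemma return_on_cycle:
  assumes x: "x \<in> S" and ret: "d \<ge> 1" "(\<phi> ^^ d) x = x" "walk \<phi> S' x d"
  shows "on_cycle x"
proof -
  let ?ret = "\<lambda>d. d \<ge> 1 \<and> (\<phi> ^^ d) x = x \<and> walk \<phi> S' x d"
  define L where "L = (LEAST d. ?ret d)"
  have L: "L \<ge> 1" "(\<phi> ^^ L) x = x" "walk \<phi> S' x L"
    using LeastI[of ?ret d] ret by (simp_all add: L_def)
  have "(\<phi> ^^ j) x \<noteq> x" if j: "1 \<le> j" "j < L" for j
  proof
    assume "(\<phi> ^^ j) x = x"
    then have "?ret j" using j walk_mono[OF L(3)] by simp
    then have "L \<le> j" unfolding L_def by (rule Least_le)
    with j show False by simp
  qed
  then have "cycle_len \<phi> S' x L" using L by (simp add: cycle_len_def)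
  then have "L dvd k" using k_cycles x by blast
  then have "(\<phi> ^^ k) x = x"
    using funpow_mod_eq[where f = \<phi> and n = L and x = x and m = k] L(2) by simp
  moreover have "walk \<phi> S' x N" for N
    unfolding walk_def
  proof (intro allI impI)
    fix i
    have "(\<phi> ^^ (i mod L)) x \<in> S'" using L(1,3) by (simp add: walk_def)
    then show "(\<phi> ^^ i) x \<in> S'"
      using funpow_mod_eq[where f = \<phi> and n = L and x = x and m = i] L(2) by simp
  qed
  ultimately show ?thesis by (simp add: on_cycle_def)
qed

(* Pigeonhole: a walk with at least |S| edges revisits a point, and by injectivity
   of phi it returns to its start. *)
lemma long_walk_on_cycle:
  assumes x: "x \<in> S" and w: "walk \<phi> S' x N" and N: "card S \<le> N"
  shows "on_cycle x"
proof -
  let ?orbit = "\<lambda>i. (\<phi> ^^ i) x"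
  have sub: "?orbit ` {0..N} \<subseteq> S" using walk_in_S[OF x w] by auto
  have "\<not> inj_on ?orbit {0..N}"
  proof
    assume "inj_on ?orbit {0..N}"
    then have "Suc N = card (?orbit ` {0..N})" by (simp add: card_image)
    also have "\<dots> \<le> card S" using card_mono[OF finS sub] .
    finally show False using N by simp
  qed
  then obtain p0 q0 where hit: "p0 \<le> N" "q0 \<le> N" "p0 \<noteq> q0" "?orbit p0 = ?orbit q0"
    unfolding inj_on_def by auto
  obtain p q where pq: "p < q" "q \<le> N" "?orbit p = ?orbit q"
  proof (cases "p0 < q0")
    case True then show ?thesis using that hit by blast
  next
    case False then show ?thesis using that[of q0 p0] hit by simp
  qed
  have wq: "walk \<phi> S' x q" using walk_mono[OF w pq(2)] .
  have wp: "walk \<phi> S' x p" using walk_mono[OF wq] pq(1) by simp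
  have "walk \<phi> S' ((\<phi> ^^ (q - p)) x) p"
    using walk_shift[of \<phi> S' x "q - p" p] wq pq(1) by simp
  moreover have "(\<phi> ^^ p) ((\<phi> ^^ (q - p)) x) = (\<phi> ^^ p) x"
    using pq by (simp flip: funpow_add_apply)
  ultimately have "(\<phi> ^^ (q - p)) x = x" using walk_funpow_inj[OF inj _ wp] by blast
  moreover have "walk \<phi> S' x (q - p)" using walk_mono[OF wq] by simp
  ultimately show ?thesis using return_on_cycle[OF x, of "q - p"] pq(1) by simp
qed

(* A walk from the start of a path component stays on the path, which is short. *)
lemma path_walk_short:
  assumes y: "y \<in> S" "y \<notin> S''" and w: "walk \<phi> S' y N" and exit: "(\<phi> ^^ e) y \<notin> S'"
  shows "2 * N < k"
proof -
  define n where "n = (LEAST e. (\<phi> ^^ e) y \<notin> S')"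
  have exit_n: "(\<phi> ^^ n) y \<notin> S'" unfolding n_def using exit by (rule LeastI)
  have "walk \<phi> S' y n" unfolding walk_def n_def using not_less_Least by blast
  then have "path_len \<phi> S' S'' y n" unfolding path_len_def using y(2) exit_n by blast
  then have "2 * n < k" using k_paths y(1) by blast
  moreover have "N \<le> n"
  proof (rule ccontr)
    assume "\<not> N \<le> n"
    then have "(\<phi> ^^ n) y \<in> S'" using w by (simp add: walk_def)
    with exit_n show False by simp
  qed
  ultimately show ?thesis by simp
qed

lemma backward_extension:
  assumes x: "x \<in> S" and w: "walk \<phi> S' x n" and off: "\<not> on_cycle x"
  shows "\<exists>y c. y \<in> S \<and> y \<notin> S'' \<and> walk \<phi> S' y (c + n) \<and> (\<phi> ^^ c) y = x"
proof -
  define B where "B = {c. \<exists>y\<in>S. walk \<phi> S' y (c + n) \<and> (\<phi> ^^ c) y = x}"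
  have "B \<subseteq> {..<card S}"
  proof
    fix c assume "c \<in> B"
    then obtain y where y: "y \<in> S" "walk \<phi> S' y (c + n)" "(\<phi> ^^ c) y = x"
      by (auto simp: B_def)
    have "\<not> on_cycle y" using on_cycle_shift[of y c] y(3) off by auto
    then have "\<not> card S \<le> c + n" using long_walk_on_cycle[OF y(1,2)] by blast
    then show "c \<in> {..<card S}" by simp
  qed
  then have finB: "finite B" by (rule finite_subset) simp
  have "0 \<in> B" using x w by (simp add: B_def)
  then have "Max B \<in> B" using finB by (intro Max_in) auto
  then obtain y where y: "y \<in> S" "walk \<phi> S' y (Max B + n)" "(\<phi> ^^ Max B) y = x"
    by (auto simp: B_def)
  have "y \<notin> S''"
  proof
    assume "y \<in> S''"
    then obtain z where z: "z \<in> S'" "\<phi> z = y" using phi_bij by (auto simp: bij_betw_def)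
    have "walk \<phi> S' z (Suc (Max B) + n)"
      unfolding walk_def
    proof (intro allI impI)
      fix i assume "i < Suc (Max B) + n"
      then show "(\<phi> ^^ i) z \<in> S'"
        using z y(2) by (cases i) (simp_all add: walk_def funpow_Suc_right del: funpow.simps)
    qed
    moreover have "(\<phi> ^^ Suc (Max B)) z = x"
      using z y(3) by (simp add: funpow_Suc_right del: funpow.simps)
    ultimately have "Suc (Max B) \<in> B" using z S'_sub by (auto simp: B_def)
    then have "Suc (Max B) \<le> Max B" by (rule Max_ge[OF finB])
    then show False by simp
  qed
  then show ?thesis using y by blast
qed

(* The choice of k: a walk with at least k/2 edges starts on a cycle. *)
lemma half_k_walk_on_cycle:
  assumes x: "x \<in> S" and w: "walk \<phi> S' x n" and kn: "k \<le> 2 * n"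
  shows "on_cycle x"
proof (rule ccontr)
  assume off: "\<not> on_cycle x"
  then obtain y c where y: "y \<in> S" "y \<notin> S''" "walk \<phi> S' y (c + n)" "(\<phi> ^^ c) y = x"
    using backward_extension[OF x w] by blast
  have "\<not> on_cycle y" using on_cycle_shift[of y c] y(4) off by auto
  then have "\<not> walk \<phi> S' y (card S)" using long_walk_on_cycle[OF y(1)] by blast
  then obtain e where "(\<phi> ^^ e) y \<notin> S'" by (auto simp: walk_def)
  then have "2 * (c + n) < k" using path_walk_short y(1-3) by blast
  then show False using kn by simp
qed

(* Synchronisation of two walks in the same direction whose lengths agree mod k:
   the longer one has at least k edges, so it starts on a cycle and can be shortened. *)
lemma synchronise_same_direction:
  assumes S: "s \<in> S" "t \<in> S" and rs: "reach \<phi> S' s a s'" and rt: "reach \<phi> S' t b t'"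
    and ab: "a mod k = b mod k"
  shows "\<exists>c. reach \<phi> S' s c s' \<and> reach \<phi> S' t c t'"
proof -
  have long: "k \<le> y" if "x < y" "x mod k = y mod k" for x y :: nat
  proof (rule ccontr)
    assume "\<not> k \<le> y"
    then have "x mod k = x" "y mod k = y" using that(1) by simp_all
    then show False using that by simp
  qed
  consider "a = b" | "a < b" | "b < a" by linarith
  then show ?thesis
  proof cases
    case 1 then show ?thesis using rs rt by blast
  next
    case 2
    have kb: "k \<le> 2 * b" using long[OF 2 ab] by simp
    have "on_cycle t" using half_k_walk_on_cycle[OF S(2) _ kb] rt by (simp add: reach_def)
    then have "reach \<phi> S' t a t'" using rt ab by (rule on_cycle_reach_mod)
    then show ?thesis using rs by blast
  next
    case 3
    have ka: "k \<le> 2 * a" using long[OF 3 ab[symmetric]] by simp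
    have "on_cycle s" using half_k_walk_on_cycle[OF S(1) _ ka] rs by (simp add: reach_def)
    then have "reach \<phi> S' s b s'" using rs ab[symmetric] by (rule on_cycle_reach_mod)
    then show ?thesis using rt by blast
  qed
qed

(* Synchronisation of two walks in opposite directions whose lengths add up to 0 mod k:
   the longer one has at least k/2 edges, so it starts on a cycle and can be walked back. *)
lemma synchronise_opposite_direction:
  assumes s: "s \<in> S" "reach \<phi> S' s a s'" and t: "t' \<in> S" "reach \<phi> S' t' b t"
    and ab: "(a + b) mod k = 0"
  shows "synchronous \<phi> S' s t s' t'"
proof (cases "a + b = 0")
  case True
  then show ?thesis using s t by (auto simp: synchronous_def reach_def)
next
  case False
  then have "k \<le> a + b" using ab by (metis mod_less not_le_imp_less)
  then consider "k \<le> 2 * a" | "k \<le> 2 * b" by linarith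
  then show ?thesis
  proof cases
    case 1
    have "on_cycle s" using half_k_walk_on_cycle[OF s(1) _ 1] s(2) by (simp add: reach_def)
    then have "reach \<phi> S' s' b s" using s(2) ab by (rule on_cycle_reach_back)
    then show ?thesis using t(2) by (auto simp: synchronous_def)
  next
    case 2
    have cyc: "on_cycle t'"
      using half_k_walk_on_cycle[OF t(1) _ 2] t(2) by (simp add: reach_def)
    have "(b + a) mod k = 0" using ab by (simp add: add.commute)
    with cyc t(2) have "reach \<phi> S' t a t'" by (rule on_cycle_reach_back)
    then show ?thesis using s(2) by (auto simp: synchronous_def)
  qed
qed

lemma eqv_pairs_synchronous:
  assumes S: "s \<in> S" "t \<in> S" "s' \<in> S" "t' \<in> S" and ij: "i < k" "j < k"
    and rs: "((i, s), (j, s')) \<in> eqv k \<phi> S'" and rt: "((i, t), (j, t')) \<in> eqv k \<phi> S'"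
  shows "synchronous \<phi> S' s t s' t'"
proof -
  obtain a where "(reach \<phi> S' s a s' \<and> j = (i + a) mod k) \<or> (reach \<phi> S' s' a s \<and> i = (j + a) mod k)"
    using eqv_reach[OF inj rs ij] by blast
  moreover obtain b where
    "(reach \<phi> S' t b t' \<and> j = (i + b) mod k) \<or> (reach \<phi> S' t' b t \<and> i = (j + b) mod k)"
    using eqv_reach[OF inj rt ij] by blast
  ultimately consider (ff) "reach \<phi> S' s a s'" "reach \<phi> S' t b t'"
      "j = (i + a) mod k" "j = (i + b) mod k"
    | (bb) "reach \<phi> S' s' a s" "reach \<phi> S' t' b t"
      "i = (j + a) mod k" "i = (j + b) mod k"
    | (fb) "reach \<phi> S' s a s'" "reach \<phi> S' t' b t"
      "j = (i + a) mod k" "i = (j + b) mod k"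
    | (bf) "reach \<phi> S' s' a s" "reach \<phi> S' t b t'"
      "i = (j + a) mod k" "j = (i + b) mod k"
    by blast
  then show ?thesis
  proof cases
    case ff
    from ff(3,4) have "(i + a) mod k = (i + b) mod k" by simp
    from synchronise_same_direction[OF S(1,2) ff(1,2) mod_add_left_cancel_nat[OF this]] show ?thesis
      by (simp add: synchronous_def)
  next
    case bb
    from bb(3,4) have "(j + a) mod k = (j + b) mod k" by simp
    from synchronise_same_direction[OF S(3,4) bb(1,2) mod_add_left_cancel_nat[OF this]] show ?thesis
      by (simp add: synchronous_def)
  next
    case fb
    from mod_round_trip[OF ij(1) fb(3,4)] show ?thesis
      by (rule synchronise_opposite_direction[OF S(1) fb(1) S(4) fb(2)])
  next
    case bf
    from mod_round_trip[OF ij(2) bf(3,4)] have "(b + a) mod k = 0" by (simp add: add.commute)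
    then have "synchronous \<phi> S' t s t' s'"
      by (rule synchronise_opposite_direction[OF S(2) bf(2) S(3) bf(1)])
    then show ?thesis by (auto simp: synchronous_def)
  qed
qed

lemma psi_pair_transport:
  assumes phi_m: "\<forall>s\<in>S'. \<forall>t\<in>S'. s \<noteq> t \<longrightarrow> m {\<phi> s, \<phi> t} = m {s, t}"
    and S: "s \<in> S" "t \<in> S" "s' \<in> S" "t' \<in> S" and ij: "i < k" "j < k" and st: "s \<noteq> t"
    and psi_s: "psi k \<phi> S' i s = psi k \<phi> S' j s'" and psi_t: "psi k \<phi> S' i t = psi k \<phi> S' j t'"
  shows "s' \<noteq> t' \<and> m {s, t} = m {s', t'}"
  using synchronous_transport[OF inj phi_m _ st]
    eqv_pairs_synchronous[OF S ij psi_eq_eqv[OF psi_s] psi_eq_eqv[OF psi_t]] .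

lemma mbar_exists:
  assumes phi_m: "\<forall>s\<in>S'. \<forall>t\<in>S'. s \<noteq> t \<longrightarrow> m {\<phi> s, \<phi> t} = m {s, t}"
  obtains mbar :: "(nat \<times> 'a) set set \<Rightarrow> enat" where
    "\<And>x y i s t. x \<noteq> y \<Longrightarrow> i < k \<Longrightarrow> s \<in> S \<Longrightarrow> t \<in> S \<Longrightarrow>
       x = psi k \<phi> S' i s \<Longrightarrow> y = psi k \<phi> S' i t \<Longrightarrow> mbar {x, y} = m {s, t}"
    "\<And>x y. x \<noteq> y \<Longrightarrow> \<not> (\<exists>i<k. \<exists>s\<in>S. \<exists>t\<in>S. x = psi k \<phi> S' i s \<and> y = psi k \<phi> S' i t) \<Longrightarrow>
       mbar {x, y} = \<infinity>"
proof -
  let ?psi = "psi k \<phi> S'"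
  define rep where "rep x y v \<longleftrightarrow> (\<exists>i<k. \<exists>s\<in>S. \<exists>t\<in>S. x = ?psi i s \<and> y = ?psi i t \<and> v = m {s, t})"
    for x y v
  have "\<exists>mbar. \<forall>x y. x \<noteq> y \<longrightarrow>
      (\<forall>v. rep x y v \<longrightarrow> mbar {x, y} = v) \<and> ((\<nexists>v. rep x y v) \<longrightarrow> mbar {x, y} = \<infinity>)"
  proof (rule doubleton_function_exists)
    fix x y v w assume xy: "x \<noteq> y" and "rep x y v" "rep x y w"
    then obtain i s t i' s' t' where idx: "i < k" "i' < k" and S: "s \<in> S" "t \<in> S" "s' \<in> S" "t' \<in> S"
      and x: "x = ?psi i s" "x = ?psi i' s'" and y: "y = ?psi i t" "y = ?psi i' t'"
      and vw: "v = m {s, t}" "w = m {s', t'}"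
      unfolding rep_def by blast
    have st: "s \<noteq> t"
    proof
      assume "s = t"
      with xy x(1) y(1) show False by simp
    qed
    have "?psi i s = ?psi i' s'" "?psi i t = ?psi i' t'"
      using trans[OF sym[OF x(1)] x(2)] trans[OF sym[OF y(1)] y(2)] .
    from psi_pair_transport[OF phi_m S idx st this] show "v = w"
      unfolding vw by (rule conjunct2)
  next
    fix x y v assume "rep x y v"
    then obtain i s t where "i < k" "s \<in> S" "t \<in> S" "x = ?psi i s" "y = ?psi i t"
      and "v = m {t, s}"
      unfolding rep_def by (auto simp: insert_commute)
    then show "rep y x v" unfolding rep_def by blast
  qed
  then obtain mbar where mbar: "\<forall>x y. x \<noteq> y \<longrightarrow>
      (\<forall>v. rep x y v \<longrightarrow> mbar {x, y} = v) \<and> ((\<nexists>v. rep x y v) \<longrightarrow> mbar {x, y} = \<infinity>)"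
    by blast
  show thesis
  proof (rule that)
    fix x y i s t assume "x \<noteq> y" "i < k" "s \<in> S" "t \<in> S" "x = ?psi i s" "y = ?psi i t"
    then have "rep x y (m {s, t})" unfolding rep_def by blast
    then show "mbar {x, y} = m {s, t}" using mbar \<open>x \<noteq> y\<close> by blast
  next
    fix x y assume "x \<noteq> y" "\<not> (\<exists>i<k. \<exists>s\<in>S. \<exists>t\<in>S. x = ?psi i s \<and> y = ?psi i t)"
    then have "\<nexists>v. rep x y v" unfolding rep_def by blast
    then show "mbar {x, y} = \<infinity>" using mbar \<open>x \<noteq> y\<close> by blast
  qed
qed

end


theorem lemma4:
  fixes S S' S'' :: "'a set" and m :: "'a set \<Rightarrow> enat" and \<phi> :: "'a \<Rightarrow> 'a" and k :: nat
  assumes finS: "finite S"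
    and m_range: "\<forall>s\<in>S. \<forall>t\<in>S. s \<noteq> t \<longrightarrow> m {s, t} \<ge> 2"
    and S'_sub: "S' \<subseteq> S" and S''_sub: "S'' \<subseteq> S"
    and phi_bij: "bij_betw \<phi> S' S''"
    and phi_m: "\<forall>s\<in>S'. \<forall>t\<in>S'. s \<noteq> t \<longrightarrow> m {\<phi> s, \<phi> t} = m {s, t}"
    and k_pos: "k \<ge> 1"
    and k_cycles: "\<forall>s\<in>S. \<forall>n. cycle_len \<phi> S' s n \<longrightarrow> n dvd k"
    and k_paths: "\<forall>s\<in>S. \<forall>n. path_len \<phi> S' S'' s n \<longrightarrow> 2 * n < k"
  shows "(\<forall>i<k. \<forall>j<k. \<forall>s\<in>S. \<forall>t\<in>S. \<forall>s'\<in>S. \<forall>t'\<in>S.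
            s \<noteq> t \<and> psi k \<phi> S' i s = psi k \<phi> S' j s' \<and> psi k \<phi> S' i t = psi k \<phi> S' j t'
            \<longrightarrow> s' \<noteq> t' \<and> m {s, t} = m {s', t'})
       \<and> (\<exists>mbar :: (nat \<times> 'a) set set \<Rightarrow> enat.
            \<forall>x\<in>Sbar k \<phi> S S'. \<forall>y\<in>Sbar k \<phi> S S'. x \<noteq> y \<longrightarrow>
              (\<forall>i<k. \<forall>s\<in>S. \<forall>t\<in>S. x = psi k \<phi> S' i s \<and> y = psi k \<phi> S' i t
                  \<longrightarrow> mbar {x, y} = m {s, t})
            \<and> ((\<not> (\<exists>i<k. \<exists>s\<in>S. \<exists>t\<in>S. x = psi k \<phi> S' i s \<and> y = psi k \<phi> S' i t))
                  \<longrightarrow> mbar {x, y} = \<infinity>))"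
proof -
  interpret fold_data S S' S'' \<phi> k
    using assms by unfold_locales auto
  obtain mbar :: "(nat \<times> 'a) set set \<Rightarrow> enat" where
    val: "\<And>x y i s t. x \<noteq> y \<Longrightarrow> i < k \<Longrightarrow> s \<in> S \<Longrightarrow> t \<in> S \<Longrightarrow>
      x = psi k \<phi> S' i s \<Longrightarrow> y = psi k \<phi> S' i t \<Longrightarrow> mbar {x, y} = m {s, t}"
    and inf: "\<And>x y. x \<noteq> y \<Longrightarrow> \<not> (\<exists>i<k. \<exists>s\<in>S. \<exists>t\<in>S. x = psi k \<phi> S' i s \<and> y = psi k \<phi> S' i t) \<Longrightarrow>
      mbar {x, y} = \<infinity>"
    by (rule mbar_exists[OF phi_m]) (rule that)
  show ?thesis
  proof (intro conjI exI[of _ mbar] ballI impI allI)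
  qed (use psi_pair_transport[OF phi_m] val inf in blast)+
qed

end
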